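(* Let $1<\beta<\sqrt{3/2}$ and let $t_0>0$ be the unique number with $\hat\sigma(t_0,\beta)=\sqrt{\beta^2-1}$. Let $k_0=\min\{k\in\mathbb{N}:\ t_0\le 2k+2\}$. Then $l(2k_0+2,\beta)\le l(t_0,\beta)$, and the strict inequality holds if $t_0\ne 2k_0+2$.
   Context: $\mathbb{N}=\{0,1,2,\dots\}$. For $t\ge 0$ let $q(t)=\lfloor t+1\rfloor/2$ if $\lfloor t\rfloor$ is odd and $q(t)=t-\lfloor t\rfloor/2$ if $\lfloor t\rfloor$ is even, and $p(t)=t+1-q(t)$. For $\beta\ge1$ let $\hat\sigma(t,\beta)\in(0,1)$ be the unique solution $\sigma$ of $\frac{p(t)\sigma}{\sqrt{1-\sigma^2}}+\frac{q(t)\sigma}{\sqrt{\beta^2-\sigma^2}}=1$ (the map $t\mapsto\hat\sigma(t,\beta)$ is strictly decreasing from $1/\sqrt2$ to $0$). The normalized length is $l(t,\beta)=\frac{p(t)}{\sqrt{1-\hat\sigma^2}}+\frac{\beta^2q(t)}{\sqrt{\beta^2-\hat\sigma^2}}-t-\sqrt2$, $\hat\sigma=\hat\sigma(t,\beta)$. *)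

theory Defs
  imports "HOL-Analysis.Analysis"
begin

definition qf :: "real \<Rightarrow> real" where
  "qf t = (if odd \<lfloor>t\<rfloor> then real_of_int \<lfloor>t + 1\<rfloor> / 2
           else t - real_of_int \<lfloor>t\<rfloor> / 2)"

definition pf :: "real \<Rightarrow> real" where
  "pf t = t + 1 - qf t"

definition sigma_hat :: "real \<Rightarrow> real \<Rightarrow> real" where
  "sigma_hat t \<beta> = (THE \<sigma>. 0 < \<sigma> \<and> \<sigma> < 1 \<and>
      pf t * \<sigma> / sqrt (1 - \<sigma>\<^sup>2) + qf t * \<sigma> / sqrt (\<beta>\<^sup>2 - \<sigma>\<^sup>2) = 1)"

definition len :: "real \<Rightarrow> real \<Rightarrow> real" where
  "len t \<beta> = (let \<sigma> = sigma_hat t \<beta> in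
      pf t / sqrt (1 - \<sigma>\<^sup>2) + \<beta>\<^sup>2 * qf t / sqrt (\<beta>\<^sup>2 - \<sigma>\<^sup>2) - t - sqrt 2)"

end

theory Submission
  imports Defs "HOL-Library.Sum_of_Squares"
begin

text \<open>
  With \<open>a = sqrt (1 - \<sigma>\<^sup>2)\<close> and \<open>b = sqrt (\<beta>\<^sup>2 - \<sigma>\<^sup>2)\<close>, the function
  \<open>phi p q \<beta> \<sigma> = p (a - 1) + q (b - 1) + \<sigma>\<close> is concave in \<open>\<sigma>\<close> with derivative
  \<open>1 - phi_slope p q \<beta> \<sigma>\<close>, so \<open>sigma_hat t \<beta>\<close> is its maximiser for \<open>(p, q) = (pf t, qf t)\<close>;
  as \<open>pf t + qf t = t + 1\<close>, the normalized length is \<open>len t \<beta> = max phi + 1 - sqrt 2\<close>.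

  On \<open>[2k+1, 2k+2)\<close> the weight \<open>qf = k + 1\<close> is fixed and \<open>pf\<close> stays below its value \<open>k + 2\<close> at
  \<open>2k+2\<close>; since \<open>phi\<close> decreases in \<open>p\<close>, evaluating at the maximiser for \<open>2k+2\<close> shows that
  \<open>len\<close> is smaller there.

  On \<open>(2k, 2k+1)\<close> we have \<open>pf = k + 1\<close>, and \<open>\<sigma>\<^sub>0 = sqrt (\<beta>\<^sup>2 - 1)\<close> makes \<open>b = 1\<close>, so
  \<open>len t\<^sub>0 \<beta>\<close> does not depend on \<open>qf t\<^sub>0 \<in> (k, k + 1)\<close>, while the defining equation at \<open>t\<^sub>0\<close>
  yields \<open>(k + 1) \<sigma>\<^sub>0 (1 + a\<^sub>0) < a\<^sub>0 (1 + \<sigma>\<^sub>0)\<close> and \<open>sigma_hat (2k+2) \<beta> < \<sigma>\<^sub>0\<close>. It remains to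
  bound \<open>phi (k + 2) (k + 1) \<beta>\<close> on \<open>[0, \<sigma>\<^sub>0)\<close>: for \<open>\<sigma>\<^sub>0 \<le> 1/2\<close> by linearising the square roots;
  for \<open>\<sigma>\<^sub>0 > 1/2\<close> the inequality above forces \<open>k = 0\<close>, and since \<open>\<beta> < sqrt (3/2)\<close> means
  \<open>\<sigma>\<^sub>0\<^sup>2 < 1/2\<close>, Taylor bounds and a polynomial inequality suffice.
\<close>

definition phi :: "real \<Rightarrow> real \<Rightarrow> real \<Rightarrow> real \<Rightarrow> real" where
  "phi p q \<beta> \<sigma> = p * (sqrt (1 - \<sigma>\<^sup>2) - 1) + q * (sqrt (\<beta>\<^sup>2 - \<sigma>\<^sup>2) - 1) + \<sigma>"

definition phi_slope :: "real \<Rightarrow> real \<Rightarrow> real \<Rightarrow> real \<Rightarrow> real" where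
  "phi_slope p q \<beta> \<sigma> = p * \<sigma> / sqrt (1 - \<sigma>\<^sup>2) + q * \<sigma> / sqrt (\<beta>\<^sup>2 - \<sigma>\<^sup>2)"

lemma sqrt_diff_square_le_tangent:
  fixes c s x :: real
  assumes "s\<^sup>2 < c" "x\<^sup>2 \<le> c"
  shows "sqrt (c - x\<^sup>2) \<le> sqrt (c - s\<^sup>2) + (s - x) * s / sqrt (c - s\<^sup>2)"
proof -
  define r where "r = sqrt (c - s\<^sup>2)"
  have r_pos: "0 < r" and r_sq: "r\<^sup>2 = c - s\<^sup>2"
    using assms(1) unfolding r_def by simp_all
  have "2 * (x * s) \<le> x\<^sup>2 + s\<^sup>2"
    using sum_squares_bound[of x s] by (simp add: power2_eq_square algebra_simps)
  then have xs: "0 \<le> c - x * s" using assms by linarith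
  have "(c - x * s)\<^sup>2 - (c - x\<^sup>2) * (c - s\<^sup>2) = c * (x - s)\<^sup>2"
    by (simp add: power2_eq_square algebra_simps)
  moreover have "0 \<le> c * (x - s)\<^sup>2"
    using order.trans[OF zero_le_power2 less_imp_le[OF assms(1)]] by simp
  ultimately have "sqrt ((c - x\<^sup>2) * (c - s\<^sup>2)) \<le> c - x * s"
    by (intro real_le_lsqrt xs) linarith
  then have "sqrt (c - x\<^sup>2) * r \<le> r\<^sup>2 + (s - x) * s"
    unfolding r_sq r_def real_sqrt_mult[symmetric] by (simp add: algebra_simps power2_eq_square)
  then show ?thesis
    using r_pos unfolding r_def[symmetric]
    by (simp add: field_simps power2_eq_square)
qed

lemma phi_le_phi_at_critical:
  assumes "0 \<le> p" "0 \<le> q" "1 \<le> \<beta>" "x\<^sup>2 \<le> 1" "s\<^sup>2 < 1"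
    and critical: "phi_slope p q \<beta> s = 1"
  shows "phi p q \<beta> x \<le> phi p q \<beta> s"
proof -
  have "1 \<le> \<beta>\<^sup>2"
    using assms(3) by (simp add: one_le_power)
  then have "sqrt (\<beta>\<^sup>2 - x\<^sup>2) \<le> sqrt (\<beta>\<^sup>2 - s\<^sup>2) + (s - x) * s / sqrt (\<beta>\<^sup>2 - s\<^sup>2)"
    using assms(4,5) by (intro sqrt_diff_square_le_tangent) linarith+
  moreover have "sqrt (1 - x\<^sup>2) \<le> sqrt (1 - s\<^sup>2) + (s - x) * s / sqrt (1 - s\<^sup>2)"
    by (rule sqrt_diff_square_le_tangent[OF assms(5,4)])
  ultimately have "p * sqrt (1 - x\<^sup>2) + q * sqrt (\<beta>\<^sup>2 - x\<^sup>2)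
      \<le> p * (sqrt (1 - s\<^sup>2) + (s - x) * s / sqrt (1 - s\<^sup>2))
        + q * (sqrt (\<beta>\<^sup>2 - s\<^sup>2) + (s - x) * s / sqrt (\<beta>\<^sup>2 - s\<^sup>2))"
    using assms(1,2) by (intro add_mono mult_left_mono)
  also have "\<dots> = p * sqrt (1 - s\<^sup>2) + q * sqrt (\<beta>\<^sup>2 - s\<^sup>2) + (s - x) * phi_slope p q \<beta> s"
    unfolding phi_slope_def divide_inverse by (simp add: algebra_simps)
  finally show ?thesis
    unfolding phi_def critical by (simp add: algebra_simps)
qed

lemma div_sqrt_diff_square_strict_mono:
  fixes x y c :: real
  assumes "0 \<le> x" "x < y" "y\<^sup>2 < c"
  shows "x / sqrt (c - x\<^sup>2) < y / sqrt (c - y\<^sup>2)"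
proof -
  have "x\<^sup>2 \<le> y\<^sup>2"
    using assms by (simp add: power_mono)
  then have "x / sqrt (c - x\<^sup>2) \<le> x / sqrt (c - y\<^sup>2)"
    using assms by (simp add: frac_le)
  also have "\<dots> < y / sqrt (c - y\<^sup>2)"
    using assms by (simp add: divide_strict_right_mono)
  finally show ?thesis .
qed

lemma phi_slope_strict_mono:
  assumes "0 < p" "0 \<le> q" "1 \<le> \<beta>" "0 \<le> x" "x < y" "y < 1"
  shows "phi_slope p q \<beta> x < phi_slope p q \<beta> y"
proof -
  have y1: "y\<^sup>2 < 1"
    using assms by (simp add: abs_square_less_1)
  moreover have "1 \<le> \<beta>\<^sup>2"
    using assms(3) by (simp add: one_le_power)
  ultimately have "x / sqrt (\<beta>\<^sup>2 - x\<^sup>2) < y / sqrt (\<beta>\<^sup>2 - y\<^sup>2)"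
    using assms by (intro div_sqrt_diff_square_strict_mono) linarith+
  then have "q * (x / sqrt (\<beta>\<^sup>2 - x\<^sup>2)) \<le> q * (y / sqrt (\<beta>\<^sup>2 - y\<^sup>2))"
    using assms(2) by (intro mult_left_mono) auto
  moreover have "p * (x / sqrt (1 - x\<^sup>2)) < p * (y / sqrt (1 - y\<^sup>2))"
    using assms y1 by (intro mult_strict_left_mono div_sqrt_diff_square_strict_mono) auto
  ultimately show ?thesis
    unfolding phi_slope_def times_divide_eq_right by linarith
qed

lemma phi_slope_eq_1_unique:
  assumes "0 < p" "0 \<le> q" "1 \<le> \<beta>" "0 \<le> x" "x < 1" "0 \<le> y" "y < 1"
    and "phi_slope p q \<beta> x = 1" "phi_slope p q \<beta> y = 1"
  shows "x = y"
  using phi_slope_strict_mono[OF assms(1-3), of x y] phi_slope_strict_mono[OF assms(1-3), of y x] assms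
  by (cases x y rule: linorder_cases) auto

lemma phi_slope_eq_1_exists:
  assumes "1 \<le> p" "0 \<le> q" "1 \<le> \<beta>"
  shows "\<exists>\<sigma>. 0 < \<sigma> \<and> \<sigma> < 1 \<and> phi_slope p q \<beta> \<sigma> = 1"
proof -
  define h :: real where "h = 1 / sqrt 2"
  have h: "0 < h" "h < 1" "h\<^sup>2 = 1/2"
    unfolding h_def by (auto simp: power_divide divide_less_eq)
  have "1 \<le> \<beta>\<^sup>2"
    using assms(3) by (simp add: one_le_power)
  have "\<forall>x\<in>{0..h}. x\<^sup>2 < 1 \<and> x\<^sup>2 < \<beta>\<^sup>2"
  proof
    fix x :: real
    assume "x \<in> {0..h}"
    then have "x\<^sup>2 \<le> h\<^sup>2"
      by (auto intro: power_mono)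
    then show "x\<^sup>2 < 1 \<and> x\<^sup>2 < \<beta>\<^sup>2"
      using h \<open>1 \<le> \<beta>\<^sup>2\<close> by linarith
  qed
  then have continuous: "continuous_on {0..h} (phi_slope p q \<beta>)"
    unfolding phi_slope_def by (intro continuous_intros) auto
  have at_0: "phi_slope p q \<beta> 0 \<le> 1"
    by (simp add: phi_slope_def)
  have at_h: "1 \<le> phi_slope p q \<beta> h"
  proof -
    have "h\<^sup>2 < \<beta>\<^sup>2"
      using h(3) \<open>1 \<le> \<beta>\<^sup>2\<close> by linarith
    then have nonneg: "0 \<le> q * h / sqrt (\<beta>\<^sup>2 - h\<^sup>2)"
      using assms(2) h(1) by simp
    have "sqrt (1 - h\<^sup>2) = h"
      using h by (intro real_sqrt_unique) simp_all
    then have "phi_slope p q \<beta> h = p + q * h / sqrt (\<beta>\<^sup>2 - h\<^sup>2)"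
      using h(1) by (simp add: phi_slope_def)
    with nonneg show ?thesis
      using assms(1) by linarith
  qed
  obtain x where x: "0 \<le> x" "x \<le> h" "phi_slope p q \<beta> x = 1"
    using IVT'[of "phi_slope p q \<beta>", OF at_0 at_h _ continuous] h(1) by auto
  have "x \<noteq> 0"
    using x(3) by (auto simp: phi_slope_def)
  then have "0 < x"
    using x(1) by simp
  moreover have "x < 1"
    using x(2) h(2) by linarith
  ultimately show ?thesis
    using x(3) by blast
qed

lemma pf_qf_lower_bounds:
  assumes "0 \<le> t"
  shows "1 \<le> pf t" "0 \<le> qf t"
proof -
  define f where "f = real_of_int \<lfloor>t\<rfloor>"
  have f: "f \<le> t" "0 \<le> f"
    using assms unfolding f_def by simp_all
  have "qf t \<le> t \<and> 0 \<le> qf t"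
  proof (cases "odd \<lfloor>t\<rfloor>")
    case True
    then have "\<lfloor>t\<rfloor> \<noteq> 0"
      by auto
    then have "1 \<le> f"
      using f(2) unfolding f_def by linarith
    moreover have "qf t = (f + 1) / 2"
      using True unfolding qf_def f_def by simp
    ultimately show ?thesis
      using f by simp
  next
    case False
    then have "qf t = t - f / 2"
      unfolding qf_def f_def by simp
    then show ?thesis
      using f by simp
  qed
  then show "1 \<le> pf t" "0 \<le> qf t"
    unfolding pf_def by simp_all
qed

lemma sigma_hat_critical:
  assumes "0 \<le> t" "1 \<le> \<beta>"
  shows "0 < sigma_hat t \<beta>" "sigma_hat t \<beta> < 1" "phi_slope (pf t) (qf t) \<beta> (sigma_hat t \<beta>) = 1"
proof -
  have "\<exists>!\<sigma>. 0 < \<sigma> \<and> \<sigma> < 1 \<and> phi_slope (pf t) (qf t) \<beta> \<sigma> = 1"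
  proof (rule ex_ex1I)
    show "\<exists>\<sigma>. 0 < \<sigma> \<and> \<sigma> < 1 \<and> phi_slope (pf t) (qf t) \<beta> \<sigma> = 1"
      using phi_slope_eq_1_exists pf_qf_lower_bounds[OF assms(1)] assms(2) by blast
  next
    fix x y
    assume "0 < x \<and> x < 1 \<and> phi_slope (pf t) (qf t) \<beta> x = 1"
      and "0 < y \<and> y < 1 \<and> phi_slope (pf t) (qf t) \<beta> y = 1"
    with pf_qf_lower_bounds[OF assms(1)] assms(2) show "x = y"
      by (auto intro: phi_slope_eq_1_unique[of "pf t" "qf t" \<beta>])
  qed
  from theI'[OF this] show "0 < sigma_hat t \<beta>" "sigma_hat t \<beta> < 1"
      "phi_slope (pf t) (qf t) \<beta> (sigma_hat t \<beta>) = 1"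
    unfolding sigma_hat_def phi_slope_def by simp_all
qed

lemma div_sqrt_diff_square_eq:
  fixes c s :: real
  assumes "s\<^sup>2 < c"
  shows "c / sqrt (c - s\<^sup>2) = sqrt (c - s\<^sup>2) + s * s / sqrt (c - s\<^sup>2)"
proof -
  define r where "r = sqrt (c - s\<^sup>2)"
  have "0 < r" "c = r * r + s * s"
    using assms unfolding r_def by (simp_all flip: power2_eq_square)
  then show ?thesis
    unfolding r_def[symmetric] by (simp add: add_divide_distrib)
qed

lemma len_eq_phi:
  assumes "0 \<le> t" "1 \<le> \<beta>"
  shows "len t \<beta> = phi (pf t) (qf t) \<beta> (sigma_hat t \<beta>) + 1 - sqrt 2"
proof -
  define s where "s = sigma_hat t \<beta>"
  have s: "0 < s" "s < 1" "phi_slope (pf t) (qf t) \<beta> s = 1"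
    using sigma_hat_critical[OF assms] unfolding s_def by simp_all
  then have "s\<^sup>2 < 1"
    by (simp add: abs_square_less_1)
  moreover have "1 \<le> \<beta>\<^sup>2"
    using assms(2) by (simp add: one_le_power)
  ultimately have "s\<^sup>2 < \<beta>\<^sup>2"
    by linarith
  have "len t \<beta> = pf t * (1 / sqrt (1 - s\<^sup>2)) + qf t * (\<beta>\<^sup>2 / sqrt (\<beta>\<^sup>2 - s\<^sup>2)) - t - sqrt 2"
    unfolding len_def Let_def s_def by simp
  also have "\<dots> = pf t * sqrt (1 - s\<^sup>2) + qf t * sqrt (\<beta>\<^sup>2 - s\<^sup>2)
      + s * phi_slope (pf t) (qf t) \<beta> s - t - sqrt 2"
    using div_sqrt_diff_square_eq[OF \<open>s\<^sup>2 < 1\<close>] div_sqrt_diff_square_eq[OF \<open>s\<^sup>2 < \<beta>\<^sup>2\<close>]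
    unfolding phi_slope_def by (simp add: algebra_simps)
  also have "\<dots> = phi (pf t) (qf t) \<beta> s + 1 - sqrt 2"
    unfolding s(3) by (simp add: phi_def pf_def algebra_simps)
  finally show ?thesis
    unfolding s_def .
qed

lemma phi_le_len:
  assumes "0 \<le> t" "1 \<le> \<beta>" "x\<^sup>2 \<le> 1"
  shows "phi (pf t) (qf t) \<beta> x + 1 - sqrt 2 \<le> len t \<beta>"
proof -
  have "0 < sigma_hat t \<beta>" "sigma_hat t \<beta> < 1"
    using sigma_hat_critical[OF assms(1,2)] by simp_all
  then have "(sigma_hat t \<beta>)\<^sup>2 < 1"
    by (simp add: abs_square_less_1)
  then have "phi (pf t) (qf t) \<beta> x \<le> phi (pf t) (qf t) \<beta> (sigma_hat t \<beta>)"
    using pf_qf_lower_bounds[OF assms(1)] assms(2,3) sigma_hat_critical(3)[OF assms(1,2)]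
    by (intro phi_le_phi_at_critical) auto
  then show ?thesis
    using len_eq_phi[OF assms(1,2)] by simp
qed

lemma pf_qf_even_interval:
  fixes m :: nat
  assumes "2 * real m \<le> t" "t < 2 * real m + 1"
  shows "pf t = real m + 1" "qf t = t - real m"
proof -
  have "\<lfloor>t\<rfloor> = 2 * int m"
    using assms by (intro floor_unique) auto
  then show "qf t = t - real m"
    unfolding qf_def by simp
  then show "pf t = real m + 1"
    unfolding pf_def by simp
qed

lemma pf_qf_odd_interval:
  fixes m :: nat
  assumes "2 * real m + 1 \<le> t" "t < 2 * real m + 2"
  shows "pf t = t - real m" "qf t = real m + 1"
proof -
  have "\<lfloor>t\<rfloor> = 2 * int m + 1" "\<lfloor>t + 1\<rfloor> = 2 * int m + 2"
    using assms by (intro floor_unique; simp)+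
  then show "qf t = real m + 1"
    unfolding qf_def by simp
  then show "pf t = t - real m"
    unfolding pf_def by simp
qed

lemma pf_qf_even:
  fixes k :: nat
  shows "pf (2 * real k + 2) = real k + 2" "qf (2 * real k + 2) = real k + 1"
  using pf_qf_even_interval[of "Suc k" "2 * real k + 2"] by simp_all

lemma len_lt_odd_interval:
  fixes k :: nat
  assumes "2 * real k + 1 \<le> t" "t < 2 * real k + 2" "1 \<le> \<beta>"
  shows "len (2 * real k + 2) \<beta> < len t \<beta>"
proof -
  define \<sigma> where "\<sigma> = sigma_hat (2 * real k + 2) \<beta>"
  have "0 < \<sigma>" "\<sigma> < 1"
    using sigma_hat_critical[OF _ assms(3)] unfolding \<sigma>_def by simp_all
  then have "\<sigma>\<^sup>2 \<le> 1" and "sqrt (1 - \<sigma>\<^sup>2) < 1"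
    by (simp_all add: abs_square_le_1)
  have "len (2 * real k + 2) \<beta> = phi (real k + 2) (real k + 1) \<beta> \<sigma> + 1 - sqrt 2"
    using len_eq_phi[OF _ assms(3), of "2 * real k + 2"] pf_qf_even[of k] unfolding \<sigma>_def by simp
  also have "\<dots> < phi (t - real k) (real k + 1) \<beta> \<sigma> + 1 - sqrt 2"
  proof -
    have "(real k + 2 - (t - real k)) * (sqrt (1 - \<sigma>\<^sup>2) - 1) < 0"
      using assms(2) \<open>sqrt (1 - \<sigma>\<^sup>2) < 1\<close> by (intro mult_pos_neg) auto
    then show ?thesis
      unfolding phi_def by (simp add: algebra_simps)
  qed
  also have "\<dots> \<le> len t \<beta>"
    using phi_le_len[OF _ assms(3) \<open>\<sigma>\<^sup>2 \<le> 1\<close>, of t] pf_qf_odd_interval[OF assms(1,2)] assms(1)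
    by simp
  finally show ?thesis .
qed

lemma quadratic_nonneg_of_le_half:
  fixes x u :: real
  assumes "0 \<le> u" "u \<le> 1/2"
  shows "0 \<le> u * x\<^sup>2 + 2 * u * (u - x) - (u\<^sup>2 - x\<^sup>2) * (1 + u)"
proof -
  have "(2 * u + 1) * (u * x\<^sup>2 + 2 * u * (u - x) - (u\<^sup>2 - x\<^sup>2) * (1 + u))
      = ((2 * u + 1) * x - u)\<^sup>2 + u ^ 3 * (1 - 2 * u)"
    by (simp add: power2_eq_square power3_eq_cube algebra_simps)
  moreover have "0 \<le> u ^ 3 * (1 - 2 * u)"
    using assms by simp
  ultimately have "0 \<le> (2 * u + 1) * (u * x\<^sup>2 + 2 * u * (u - x) - (u\<^sup>2 - x\<^sup>2) * (1 + u))"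
    by simp
  then show ?thesis
    using assms(1) by (simp add: zero_le_mult_iff)
qed

lemma sqrt_one_minus_le:
  fixes y :: real
  assumes "0 \<le> y" "y \<le> 1"
  shows "sqrt (1 - y) \<le> 1 - y / 2 - y\<^sup>2 / 8"
proof (rule real_le_lsqrt)
  have "y\<^sup>2 \<le> y"
    using assms by (simp add: power2_eq_square mult_left_le)
  then show "0 \<le> 1 - y / 2 - y\<^sup>2 / 8"
    using assms by simp
  have "(1 - y / 2 - y\<^sup>2 / 8)\<^sup>2 = 1 - y + y ^ 3 / 8 + y ^ 4 / 64"
    by (simp add: power2_eq_square power3_eq_cube power4_eq_xxxx field_simps)
  then show "1 - y \<le> (1 - y / 2 - y\<^sup>2 / 8)\<^sup>2"
    using assms by simp
qed

lemma sqrt_one_plus_le: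
  fixes d :: real
  assumes "0 \<le> d" "d \<le> 1/2"
  shows "sqrt (1 + d) \<le> 1 + d / 2 - d\<^sup>2 / 10"
proof (rule real_le_lsqrt)
  have "d\<^sup>2 \<le> d"
    using assms by (simp add: power2_eq_square mult_left_le)
  then show "0 \<le> 1 + d / 2 - d\<^sup>2 / 10"
    using assms by simp
  have "(1 + d / 2 - d\<^sup>2 / 10)\<^sup>2 - (1 + d) = d\<^sup>2 * ((1 - 2 * d) / 20 + d\<^sup>2 / 100)"
    by (simp add: field_simps power2_eq_square)
  moreover have "0 \<le> d\<^sup>2 * ((1 - 2 * d) / 20 + d\<^sup>2 / 100)"
    using assms by (intro mult_nonneg_nonneg) auto
  ultimately show "1 + d \<le> (1 + d / 2 - d\<^sup>2 / 10)\<^sup>2"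
    by linarith
qed

lemma quartic_square_lt:
  fixes u :: real
  assumes "1/2 \<le> u" "u\<^sup>2 \<le> 1/2"
  shows "(330 - 280*u + 140*u\<^sup>2 - 28*u^4)\<^sup>2 < 78400 * (1 - u\<^sup>2)"
    using assms by (sos "((R<1 + ((R<1 * ((R<1994821/140737488355328 * [308255/1994821*u^5 + ~3377481/3989642*u^4 + ~1368981/1994821*u^3 + ~566485/1994821*u^2 + ~1149180/1994821*u + 1]^2) + ((R<631009054675/17546631078653984768 * [~534949110819/2524036218700*u^5 + ~220980805711/1009614487480*u^4 + ~901878768917/1262018109350*u^3 + ~1870347001211/2524036218700*u^2 + u]^2) + ((R<480894912718896381/22201657371107335444889600 * [28372132321596458/160298304239632127*u^5 + ~421953276080442160/480894912718896381*u^4 + ~1569330201592604069/1923579650875585524*u^3 + u^2]^2) + ((R<4544197491802507884287705/270719768715648617363243765071872 * [~330811646198157538915788/649171070257501126326815*u^5 + ~107818159141936971900970/129834214051500225265363*u^4 + u^3]^2) + ((R<92227687035996641857650126217/9136270594098087972886397035617452032 * [~144843091568456560250183777080/92227687035996641857650126217*u^5 + u^4]^2) + (R<4569628622353640534193752661943337/4056216571958566415814983470205820920135680 * [u^5]^2))))))) + (((A<=2 * R<1) * ((R<1147166733/4398046511104 * [10490126759/9177333864*u + 1]^2) + (R<36078308187713831/322898729454414329806848 * [u]^2))) + (((A<=1 * R<1) * ((R<190682566865451/35184372088832 * [~9073564903919/63560855621817*u^4 + ~6379894977860/190682566865451*u^3 + 89760913580090/190682566865451*u^2 + 294452938421578/190682566865451*u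 + 1]^2) + ((R<31748604099025455221612449/3354523191723807855781871616 * [~129220752277207611670638273/31748604099025455221612449*u^4 + ~65361140011367477954915948/31748604099025455221612449*u^3 + ~20690301765457418458364155/31748604099025455221612449*u^2 + u]^2) + ((R<104153136676584505458568840769555/1117054699921128453311184083693305069568 * [290853131332571070588490176914333/104153136676584505458568840769555*u^4 + 146648069413919253783177100617782/104153136676584505458568840769555*u^3 + u^2]^2) + ((R<445446892774277139746197004761136255331/916140678761981091686167867535094164425277440 * [1345947093412025855971553800969827429763/890893785548554279492394009522272510662*u^4 + u^3]^2) + (R<2585961412221335011202790273829614317372384779/15672769221184217294850767878735761477194142965563392 * [u^4]^2)))))) + (((A<=1 * (A<=2 * R<1)) * (R<910657/17592186044416 * [1]^2)) + (((A<=0 * R<1) * ((R<5021957867221/35184372088832 * [6735292085593/5021957867221*u^4 + ~11578902203540/5021957867221*u^3 + 4269858798530/5021957867221*u^2 + ~6345432595957/5021957867221*u + 1]^2) + ((R<7411727468651207585/88347217107370415736487936 * [~2060143645435515097/1482345493730241517*u^4 + 23475218979695209547/14823454937302415170*u^3 + ~26305552483130637133/14823454937302415170*u^2 + u]^2) + ((R<26311817358684852284269821/521553954156082000830171384381440 * [4220777883507406405769490/8770605786228284094756607*u^4 + ~39861696267186368056882459/26311817358684852284269821*u^3 + u^2]^2) + ((R<19485984497485360253299879291477/462882386140678316570745964276834369536 * [~16944143337187268739006499372584/19485984497485360253299879291477*u^4 + u^3]^2) + (R<14755782177819426504012578700543250851/685602129076736954586736702567558074664484864 * [u^4]^2))))))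 + (((A<=0 * (A<=2 * R<1)) * (R<180242163/35184372088832 * [1]^2)) + ((A<=0 * (A<=1 * R<1)) * ((R<1620809767965609/35184372088832 * [171850393345559/1620809767965609*u^3 + ~407564408902315/1620809767965609*u^2 + 164270237887741/1620809767965609*u + 1]^2) + ((R<2245843069821296513291/57027173961315443570468978688 * [~722321433277220496773/2245843069821296513291*u^3 + 132720263432729066545/2245843069821296513291*u^2 + u]^2) + ((R<3613764468578677220130192513/79018578221717201624298900120666112 * [228752575336970674064025814/516252066939811031447170359*u^3 + u^2]^2) + (R<355599967355835619520386882115719/4541001203709729137634558450986146332672 * [u^3]^2)))))))))))))")

lemma quartic_lt_sqrt_one_minus_square:
  fixes u :: real
  assumes "1/2 \<le> u" "u\<^sup>2 \<le> 1/2"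
  shows "1 - u + u\<^sup>2 / 2 - u ^ 4 / 10 + 5 / 28 < sqrt (1 - u\<^sup>2)"
proof (rule real_less_rsqrt)
  have "(330 - 280*u + 140*u\<^sup>2 - 28*u^4)\<^sup>2
      = 78400 * (1 - u + u\<^sup>2 / 2 - u ^ 4 / 10 + 5 / 28)\<^sup>2"
    by (simp add: power2_eq_square field_simps)
  with quartic_square_lt[OF assms] show "(1 - u + u\<^sup>2 / 2 - u ^ 4 / 10 + 5 / 28)\<^sup>2 < 1 - u\<^sup>2"
    by simp
qed

lemma taylor_polynomial_lt_sqrt:
  fixes s u :: real
  assumes "1/2 \<le> u" "u\<^sup>2 \<le> 1/2"
  shows "1 - s\<^sup>2 - s ^ 4 / 4 + (u\<^sup>2 - s\<^sup>2) / 2 - (u\<^sup>2 - s\<^sup>2)\<^sup>2 / 10 + s - u < sqrt (1 - u\<^sup>2)"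
    (is "?P < _")
proof -
  \<comment> \<open>an opaque \<open>P\<close> keeps linarith from expanding the polynomial\<close>
  define P where "P = ?P"
  have "20 * P = 20 - 20 * u + 10 * u\<^sup>2 - 2 * u ^ 4 + 20 * s - 30 * s\<^sup>2 + 4 * (u\<^sup>2 * s\<^sup>2) - 7 * s ^ 4"
    unfolding P_def by (simp add: field_simps power2_eq_square power4_eq_xxxx)
  moreover have "u\<^sup>2 * s\<^sup>2 \<le> 1/2 * s\<^sup>2"
    using assms(2) by (intro mult_right_mono) auto
  moreover have "s - 7/5 * s\<^sup>2 \<le> 5/28"
  proof -
    have "7/5 * (s - 5/14)\<^sup>2 = 5/28 - s + 7/5 * s\<^sup>2"
      by (simp add: field_simps power2_eq_square)
    then show ?thesis
      using zero_le_power2[of "s - 5/14"] by linarith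
  qed
  moreover have "0 \<le> s ^ 4"
    by simp
  ultimately have "P \<le> 1 - u + u\<^sup>2 / 2 - u ^ 4 / 10 + 5 / 28"
    by linarith
  also have "\<dots> < sqrt (1 - u\<^sup>2)"
    by (rule quartic_lt_sqrt_one_minus_square[OF assms])
  finally show ?thesis
    unfolding P_def .
qed

text \<open>
  With \<open>d = u\<^sup>2 - \<sigma>\<^sup>2\<close>, the square roots are linearised by
  \<open>a - a\<^sub>0 = d / (a + a\<^sub>0) \<le> d / (2 a\<^sub>0)\<close>, \<open>b - 1 = d / (b + 1) < d / 2\<close> and
  \<open>1 - a = \<sigma>\<^sup>2 / (1 + a) \<ge> \<sigma>\<^sup>2 / 2\<close>.
\<close>
lemma phi_gap_lower_bound:
  fixes n u \<sigma> \<beta> :: real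
  assumes "0 \<le> \<sigma>" "\<sigma> < u" "u\<^sup>2 < 1" "0 < n" "\<beta>\<^sup>2 = 1 + u\<^sup>2"
  defines "a\<^sub>0 \<equiv> sqrt (1 - u\<^sup>2)"
  shows "a\<^sub>0 * \<sigma>\<^sup>2 + 2 * a\<^sub>0 * (u - \<sigma>) - n * (u\<^sup>2 - \<sigma>\<^sup>2) * (1 + a\<^sub>0)
    < 2 * a\<^sub>0 * (n * (a\<^sub>0 - 1) + u - phi (n + 1) n \<beta> \<sigma>)"
proof -
  define a b d where "a = sqrt (1 - \<sigma>\<^sup>2)" and "b = sqrt (\<beta>\<^sup>2 - \<sigma>\<^sup>2)" and "d = u\<^sup>2 - \<sigma>\<^sup>2"
  have "\<sigma>\<^sup>2 < u\<^sup>2"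
    using assms(1,2) by (simp add: power_strict_mono)
  then have "0 < d" and "0 < a\<^sub>0" and "a\<^sub>0 < a" and "a \<le> 1" and "1 < b"
    using assms(3,5) unfolding a\<^sub>0_def a_def b_def d_def by simp_all
  have "(a + a\<^sub>0) * (a - a\<^sub>0) = d" and "(b + 1) * (b - 1) = d" and "(1 + a) * (1 - a) = \<sigma>\<^sup>2"
    using assms(3,5) \<open>\<sigma>\<^sup>2 < u\<^sup>2\<close> unfolding a\<^sub>0_def a_def b_def d_def
    by (simp_all add: algebra_simps flip: power2_eq_square)
  moreover have "2 * a\<^sub>0 * (a - a\<^sub>0) \<le> (a + a\<^sub>0) * (a - a\<^sub>0)"
    using \<open>a\<^sub>0 < a\<close> by (intro mult_right_mono) auto
  moreover have "2 * (b - 1) < (b + 1) * (b - 1)"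
    using \<open>1 < b\<close> by (intro mult_strict_right_mono) auto
  moreover have "(1 + a) * (1 - a) \<le> 2 * (1 - a)"
    using \<open>a \<le> 1\<close> by (intro mult_right_mono) auto
  ultimately have "a\<^sub>0 * \<sigma>\<^sup>2 \<le> a\<^sub>0 * (2 * (1 - a))" and "n * (2 * a\<^sub>0 * (a - a\<^sub>0)) \<le> n * d"
      and "a\<^sub>0 * n * (2 * (b - 1)) < a\<^sub>0 * n * d"
    using \<open>0 < a\<^sub>0\<close> assms(4) by (simp_all add: mult_left_mono)
  then show ?thesis
    unfolding phi_def a_def[symmetric] b_def[symmetric] d_def[symmetric]
    by (simp add: algebra_simps)
qed

lemma phi_lt_of_le_half:
  fixes n u \<sigma> \<beta> :: real
  assumes "0 \<le> \<sigma>" "\<sigma> < u" "u \<le> 1/2" "0 < n" "\<beta>\<^sup>2 = 1 + u\<^sup>2"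
    and balance: "n * u * (1 + sqrt (1 - u\<^sup>2)) < sqrt (1 - u\<^sup>2) * (1 + u)"
  shows "phi (n + 1) n \<beta> \<sigma> < n * (sqrt (1 - u\<^sup>2) - 1) + u"
proof -
  define a\<^sub>0 d E where "a\<^sub>0 = sqrt (1 - u\<^sup>2)" and "d = u\<^sup>2 - \<sigma>\<^sup>2"
    and "E = n * (a\<^sub>0 - 1) + u - phi (n + 1) n \<beta> \<sigma>"
  have "0 < u" "u\<^sup>2 < 1"
    using assms(1-3) by (simp_all add: abs_square_less_1)
  then have "0 < a\<^sub>0" "0 < d"
    using assms(1,2) unfolding a\<^sub>0_def d_def by (simp_all add: power_strict_mono)
  have lower: "a\<^sub>0 * \<sigma>\<^sup>2 + 2 * a\<^sub>0 * (u - \<sigma>) - n * d * (1 + a\<^sub>0) < 2 * a\<^sub>0 * E"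
    using phi_gap_lower_bound[OF assms(1,2) \<open>u\<^sup>2 < 1\<close> assms(4,5)] unfolding a\<^sub>0_def d_def E_def .
  have "u * (n * d * (1 + a\<^sub>0)) \<le> a\<^sub>0 * d * (1 + u)"
    using mult_right_mono[OF less_imp_le[OF balance], of d] \<open>0 < d\<close>
    unfolding a\<^sub>0_def by (simp add: algebra_simps)
  moreover have "0 \<le> a\<^sub>0 * (u * \<sigma>\<^sup>2 + 2 * u * (u - \<sigma>) - d * (1 + u))"
    using quadratic_nonneg_of_le_half[of u \<sigma>] \<open>0 < u\<close> \<open>0 < a\<^sub>0\<close> assms(3) unfolding d_def by simp
  moreover have "u * (a\<^sub>0 * \<sigma>\<^sup>2 + 2 * a\<^sub>0 * (u - \<sigma>) - n * d * (1 + a\<^sub>0)) < u * (2 * a\<^sub>0 * E)"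
    using lower \<open>0 < u\<close> by simp
  ultimately have "0 < u * (2 * a\<^sub>0 * E)"
    by (simp add: algebra_simps)
  then have "0 < E"
    using \<open>0 < u\<close> \<open>0 < a\<^sub>0\<close> by (simp add: zero_less_mult_iff)
  then show ?thesis
    unfolding E_def a\<^sub>0_def by simp
qed

lemma phi_two_one_lt:
  fixes u \<sigma> \<beta> :: real
  assumes "0 \<le> \<sigma>" "\<sigma> < u" "1/2 \<le> u" "u\<^sup>2 \<le> 1/2" "\<beta>\<^sup>2 = 1 + u\<^sup>2"
  shows "phi 2 1 \<beta> \<sigma> < sqrt (1 - u\<^sup>2) - 1 + u"
proof -
  define d where "d = u\<^sup>2 - \<sigma>\<^sup>2"
  have "\<sigma>\<^sup>2 < u\<^sup>2"
    using assms(1,2) by (simp add: power_strict_mono)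
  then have "0 \<le> d" "d \<le> 1/2" "\<sigma>\<^sup>2 \<le> 1"
    using assms(4) zero_le_power2[of \<sigma>] unfolding d_def by linarith+
  have "sqrt (1 - \<sigma>\<^sup>2) \<le> 1 - \<sigma>\<^sup>2 / 2 - \<sigma> ^ 4 / 8"
    using sqrt_one_minus_le[of "\<sigma>\<^sup>2"] \<open>\<sigma>\<^sup>2 \<le> 1\<close> by (simp flip: power_mult)
  moreover have "sqrt (\<beta>\<^sup>2 - \<sigma>\<^sup>2) \<le> 1 + d / 2 - d\<^sup>2 / 10"
    using sqrt_one_plus_le[OF \<open>0 \<le> d\<close> \<open>d \<le> 1/2\<close>] assms(5) unfolding d_def by (simp add: algebra_simps)
  moreover have "1 - \<sigma>\<^sup>2 - \<sigma> ^ 4 / 4 + d / 2 - d\<^sup>2 / 10 + \<sigma> - u < sqrt (1 - u\<^sup>2)"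
    using taylor_polynomial_lt_sqrt[OF assms(3,4)] unfolding d_def .
  ultimately show ?thesis
    unfolding phi_def by argo
qed

lemma phi_lt_at_even_critical:
  fixes k :: nat and u \<sigma> \<beta> :: real
  assumes "0 \<le> \<sigma>" "\<sigma> < u" "u\<^sup>2 < 1/2" "\<beta>\<^sup>2 = 1 + u\<^sup>2"
    and balance: "(real k + 1) * u * (1 + sqrt (1 - u\<^sup>2)) < sqrt (1 - u\<^sup>2) * (1 + u)"
  shows "phi (real k + 2) (real k + 1) \<beta> \<sigma> < (real k + 1) * (sqrt (1 - u\<^sup>2) - 1) + u"
proof (cases "u \<le> 1/2")
  case True
  then show ?thesis
    using phi_lt_of_le_half[OF assms(1,2) True _ assms(4) balance] by (simp add: add.assoc)
next
  case False
  have "k = 0"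
  proof (rule ccontr)
    assume "k \<noteq> 0"
    define a\<^sub>0 where "a\<^sub>0 = sqrt (1 - u\<^sup>2)"
    have "0 < u" "0 \<le> a\<^sub>0" "a\<^sub>0 \<le> 1"
      using assms(1-3) unfolding a\<^sub>0_def by simp_all
    with \<open>k \<noteq> 0\<close> have "2 * u * (1 + a\<^sub>0) \<le> (real k + 1) * u * (1 + a\<^sub>0)"
      by (intro mult_right_mono) auto
    with balance have "u * (2 + a\<^sub>0) < a\<^sub>0"
      unfolding a\<^sub>0_def[symmetric] by (simp add: algebra_simps)
    moreover have "2 * u \<le> u * (2 + a\<^sub>0)"
      using \<open>0 < u\<close> \<open>0 \<le> a\<^sub>0\<close> by (simp add: algebra_simps)
    ultimately show False
      using False \<open>a\<^sub>0 \<le> 1\<close> by linarith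
  qed
  then show ?thesis
    using phi_two_one_lt[of \<sigma> u \<beta>] assms False by simp
qed

lemma critical_on_even_interval:
  fixes k :: nat
  assumes "2 * real k < t" "t < 2 * real k + 1" "1 \<le> \<beta>" "\<beta>\<^sup>2 = 1 + u\<^sup>2"
    and critical: "sigma_hat t \<beta> = u"
  defines "n \<equiv> real k + 1" and "a\<^sub>0 \<equiv> sqrt (1 - u\<^sup>2)"
  shows "len t \<beta> = n * (a\<^sub>0 - 1) + u + 1 - sqrt 2"
    and "n * u * (1 + a\<^sub>0) < a\<^sub>0 * (1 + u)"
    and "1 < phi_slope (n + 1) n \<beta> u"
proof -
  have t: "0 \<le> t" "pf t = n" "qf t = t - real k"
    using assms(1,2) pf_qf_even_interval[of k t] unfolding n_def by simp_all
  have "0 < u" "u < 1"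
    using sigma_hat_critical[OF t(1) assms(3)] unfolding critical by simp_all
  then have "0 < a\<^sub>0" and beta_u: "sqrt (\<beta>\<^sup>2 - u\<^sup>2) = 1"
    unfolding a\<^sub>0_def assms(4) by (simp_all add: abs_square_less_1)
  show "len t \<beta> = n * (a\<^sub>0 - 1) + u + 1 - sqrt 2"
    using len_eq_phi[OF t(1) assms(3)] beta_u unfolding critical t(2,3) a\<^sub>0_def phi_def by simp
  have root: "n * u / a\<^sub>0 + (t - real k) * u = 1"
    using sigma_hat_critical(3)[OF t(1) assms(3)] beta_u
    unfolding critical t(2,3) a\<^sub>0_def phi_slope_def by simp
  then have "n * u + (t - real k) * u * a\<^sub>0 = a\<^sub>0"
    using \<open>0 < a\<^sub>0\<close> by (simp add: field_simps)
  moreover have "(n - 1) * (u * a\<^sub>0) < (t - real k) * (u * a\<^sub>0)"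
    using assms(1) \<open>0 < u\<close> \<open>0 < a\<^sub>0\<close> unfolding n_def by (intro mult_strict_right_mono) auto
  ultimately show "n * u * (1 + a\<^sub>0) < a\<^sub>0 * (1 + u)"
    by (simp add: algebra_simps)
  have "phi_slope (n + 1) n \<beta> u = (n * u / a\<^sub>0 + (t - real k) * u) + u / a\<^sub>0 + (n - (t - real k)) * u"
    unfolding phi_slope_def beta_u a\<^sub>0_def[symmetric] by (simp add: algebra_simps add_divide_distrib)
  moreover have "0 < u / a\<^sub>0" "0 < (n - (t - real k)) * u"
    using \<open>0 < u\<close> \<open>0 < a\<^sub>0\<close> assms(2) unfolding n_def by simp_all
  ultimately show "1 < phi_slope (n + 1) n \<beta> u"
    using root by linarith
qed

lemma len_lt_even_interval:
  fixes k :: nat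
  assumes "2 * real k < t" "t < 2 * real k + 1" "1 < \<beta>" "\<beta>\<^sup>2 < 3/2"
    and critical: "sigma_hat t \<beta> = sqrt (\<beta>\<^sup>2 - 1)"
  shows "len (2 * real k + 2) \<beta> < len t \<beta>"
proof -
  define u \<sigma> where "u = sqrt (\<beta>\<^sup>2 - 1)" and "\<sigma> = sigma_hat (2 * real k + 2) \<beta>"
  have "1 < \<beta>\<^sup>2"
    using assms(3) by (simp add: one_less_power)
  then have u: "0 < u" "\<beta>\<^sup>2 = 1 + u\<^sup>2" "u\<^sup>2 < 1/2"
    using assms(4) unfolding u_def by simp_all
  note at_t = critical_on_even_interval[OF assms(1,2) _ u(2), unfolded critical u_def[symmetric]]
  have \<sigma>: "0 < \<sigma>" "\<sigma> < 1" "phi_slope (real k + 2) (real k + 1) \<beta> \<sigma> = 1"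
    using sigma_hat_critical[of "2 * real k + 2" \<beta>] assms(3) pf_qf_even[of k] unfolding \<sigma>_def by simp_all
  have "\<sigma> < u"
  proof (rule ccontr)
    assume "\<not> \<sigma> < u"
    then have "phi_slope (real k + 2) (real k + 1) \<beta> u \<le> phi_slope (real k + 2) (real k + 1) \<beta> \<sigma>"
      using phi_slope_strict_mono[of "real k + 2" "real k + 1" \<beta> u \<sigma>] u(1) assms(3) \<sigma>(2)
      by (cases "u = \<sigma>") auto
    with at_t(3) \<sigma>(3) assms(3) show False
      by (simp add: add.assoc)
  qed
  then have "phi (real k + 2) (real k + 1) \<beta> \<sigma> + 1 - sqrt 2 < len t \<beta>"
    using phi_lt_at_even_critical[of \<sigma> u \<beta> k] \<sigma>(1) u at_t(1,2) assms(3) by simp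
  moreover have "len (2 * real k + 2) \<beta> = phi (real k + 2) (real k + 1) \<beta> \<sigma> + 1 - sqrt 2"
    using len_eq_phi[of "2 * real k + 2" \<beta>] assms(3) pf_qf_even[of k] unfolding \<sigma>_def by simp
  ultimately show ?thesis
    by simp
qed

lemma least_index_bounds:
  fixes t :: real and k :: nat
  assumes "0 < t" "k = (LEAST k::nat. t \<le> 2 * real k + 2)"
  shows "2 * real k < t" "t \<le> 2 * real k + 2"
proof -
  have "t \<le> 2 * real (nat \<lceil>t\<rceil>) + 2"
    using real_nat_ceiling_ge[of t] by linarith
  then show "t \<le> 2 * real k + 2"
    unfolding assms(2) by (rule LeastI)
  show "2 * real k < t"
  proof (cases k)
    case (Suc m)
    then have "\<not> t \<le> 2 * real m + 2"
      using not_less_Least[of m "\<lambda>k. t \<le> 2 * real k + 2"] assms(2) by simp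
    then show ?thesis
      using Suc by simp
  qed (use assms(1) in simp)
qed

theorem theorem3p5:
  fixes \<beta> t\<^sub>0 :: real and k\<^sub>0 :: nat
  assumes "1 < \<beta>" and "\<beta> < sqrt (3/2)"
    and "t\<^sub>0 > 0" and "sigma_hat t\<^sub>0 \<beta> = sqrt (\<beta>\<^sup>2 - 1)"
    and "k\<^sub>0 = (LEAST k::nat. t\<^sub>0 \<le> 2 * real k + 2)"
  shows "len (2 * real k\<^sub>0 + 2) \<beta> \<le> len t\<^sub>0 \<beta>
     \<and> (t\<^sub>0 \<noteq> 2 * real k\<^sub>0 + 2 \<longrightarrow> len (2 * real k\<^sub>0 + 2) \<beta> < len t\<^sub>0 \<beta>)"
proof -
  have bounds: "2 * real k\<^sub>0 < t\<^sub>0" "t\<^sub>0 \<le> 2 * real k\<^sub>0 + 2"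
    using least_index_bounds[OF assms(3,5)] by simp_all
  have "\<beta>\<^sup>2 < 3/2"
    using power_strict_mono[OF assms(2), of 2] assms(1) by simp
  have "len (2 * real k\<^sub>0 + 2) \<beta> < len t\<^sub>0 \<beta>" if "t\<^sub>0 \<noteq> 2 * real k\<^sub>0 + 2"
  proof (cases "2 * real k\<^sub>0 + 1 \<le> t\<^sub>0")
    case True
    then show ?thesis
      using len_lt_odd_interval[of k\<^sub>0 t\<^sub>0 \<beta>] bounds that assms(1) by simp
  next
    case False
    then show ?thesis
      using len_lt_even_interval[of k\<^sub>0 t\<^sub>0 \<beta>] bounds \<open>\<beta>\<^sup>2 < 3/2\<close> assms(1,4) by simp
  qed
  then show ?thesis
    by (cases "t\<^sub>0 = 2 * real k\<^sub>0 + 2") auto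
qed

end
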